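(* Let $N$ be a finite set with $|N|\ge2$ and let $o\in\mathbb{R}^{\Upsilon}$ be an SE objective. Then there exists a unique $\tau_o\in\mathbb{R}^{\mathcal{S}}$ such that $\langle o,\eta\rangle_{\Upsilon}=\langle\tau_o,c_\eta\rangle_{\mathcal{S}}$ for all $\eta\in\mathbb{R}^{\Upsilon}$. Specifically, $$\tau_o(T)=\sum_{\emptyset\neq K\subseteq R}(-1)^{|R\setminus K|}\,o(b|K)\quad\text{for } T\in\mathcal{S},\ b\in T,\ R=T\setminus\{b\},$$ and this expression does not depend on the choice of $b\in T$.
   Context: $\mathrm{DAG}(N)$ is the set of acyclic directed graphs over $N$; $\mathrm{pa}_G(a)$ is the parent set of $a$ in $G$; $G\sim H$ (Markov equivalence) means same adjacencies and same immoralities. $\Upsilon=\{(a|B): a\in N,\ \emptyset\neq B\subseteq N\setminus\{a\}\}$; $\eta_G\in\mathbb{R}^{\Upsilon}$ has $\eta_G(a|B)=1$ if $B=\mathrm{pa}_G(a)$, else $0$. $o$ is an SE objective if $\langle o,\eta_G\rangle=\langle o,\eta_H\rangle$ whenever $G\sim H$. $\mathcal{S}=\{S\subseteq N:|S|\ge 2\}$, and for $\eta\in\mathbb{R}^{\Upsilon}$, $c_\eta\in\mathbb{R}^{\mathcal{S}}$ is $c_\eta(S)=\sum_{a\in S}\sum_{B:\,S\setminus\{a\}\subseteq B\subseteq N\setminus\{a\}}\eta(a|B)$. Convention: $o(b|\emptyset)=0$ for $b\in N$. *)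

theory Defs
  imports Complex_Main
begin

text \<open>Index set Upsilon: pairs (a,B) standing for (a|B).\<close>
definition Ups :: "'a set \<Rightarrow> ('a \<times> 'a set) set" where
  "Ups N = {(a, B). a \<in> N \<and> B \<noteq> {} \<and> B \<subseteq> N - {a}}"

definition Sets2 :: "'a set \<Rightarrow> 'a set set" where
  "Sets2 N = {S. S \<subseteq> N \<and> 2 \<le> card S}"

definition ip_Ups :: "'a set \<Rightarrow> ('a \<times> 'a set \<Rightarrow> real) \<Rightarrow> ('a \<times> 'a set \<Rightarrow> real) \<Rightarrow> real" where
  "ip_Ups N o' \<eta> = (\<Sum>p\<in>Ups N. o' p * \<eta> p)"

definition ip_S :: "'a set \<Rightarrow> ('a set \<Rightarrow> real) \<Rightarrow> ('a set \<Rightarrow> real) \<Rightarrow> real" where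
  "ip_S N \<tau> c = (\<Sum>S\<in>Sets2 N. \<tau> S * c S)"

definition DAG :: "'a set \<Rightarrow> ('a \<times> 'a) set set" where
  "DAG N = {G. G \<subseteq> N \<times> N \<and> acyclic G}"

definition pa :: "('a \<times> 'a) set \<Rightarrow> 'a \<Rightarrow> 'a set" where
  "pa G a = {b. (b, a) \<in> G}"

definition adj :: "('a \<times> 'a) set \<Rightarrow> 'a \<Rightarrow> 'a \<Rightarrow> bool" where
  "adj G a b \<longleftrightarrow> (a, b) \<in> G \<or> (b, a) \<in> G"

definition immoralities :: "('a \<times> 'a) set \<Rightarrow> ('a \<times> 'a \<times> 'a) set" where
  "immoralities G = {(a, c, b). (a, c) \<in> G \<and> (b, c) \<in> G \<and> a \<noteq> b \<and> \<not> adj G a b}"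

definition markov_equiv :: "('a \<times> 'a) set \<Rightarrow> ('a \<times> 'a) set \<Rightarrow> bool" where
  "markov_equiv G H \<longleftrightarrow> (\<forall>a b. adj G a b \<longleftrightarrow> adj H a b) \<and> immoralities G = immoralities H"

definition eta_G :: "('a \<times> 'a) set \<Rightarrow> 'a \<times> 'a set \<Rightarrow> real" where
  "eta_G G = (\<lambda>(a, B). if B = pa G a then 1 else 0)"

definition SE_objective :: "'a set \<Rightarrow> ('a \<times> 'a set \<Rightarrow> real) \<Rightarrow> bool" where
  "SE_objective N o' \<longleftrightarrow>
     (\<forall>G\<in>DAG N. \<forall>H\<in>DAG N. markov_equiv G H \<longrightarrow> ip_Ups N o' (eta_G G) = ip_Ups N o' (eta_G H))"

definition c_eta :: "'a set \<Rightarrow> ('a \<times> 'a set \<Rightarrow> real) \<Rightarrow> 'a set \<Rightarrow> real" where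
  "c_eta N \<eta> S = (\<Sum>a\<in>S. \<Sum>B\<in>{B. S - {a} \<subseteq> B \<and> B \<subseteq> N - {a}}. \<eta> (a, B))"

end

theory Submission
  imports Defs
begin

text \<open>Since \<open>\<langle>\<tau>, c\<^sub>\<eta>\<rangle>\<close> is linear in \<open>\<eta>\<close>, \<open>\<tau>\<close> represents \<open>o\<close> iff
  \<open>o(a|B) = \<Sum>\<^bsub>\<emptyset> \<noteq> K \<subseteq> B\<^esub> \<tau>(K \<union> {a})\<close> for every \<open>(a|B) \<in> \<Upsilon>\<close>, i.e. iff \<open>o(b|\<cdot>)\<close> (with
  \<open>o(b|\<emptyset>) = 0\<close>) is the zeta transform of \<open>K \<mapsto> \<tau>(K \<union> {b})\<close> on the subsets of \<open>N - {b}\<close>.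
  Moebius inversion then forces the stated formula, hence uniqueness. For existence, take the
  formula for some \<open>b \<in> T\<close>: it does not depend on \<open>b\<close>, because score equivalence applied to the
  Markov equivalent DAGs \<open>B \<rightarrow> a \<rightarrow> b \<leftarrow> B\<close> and \<open>B \<rightarrow> b \<rightarrow> a \<leftarrow> B\<close> gives
  \<open>o(a|B) + o(b|B \<union> {a}) = o(b|B) + o(a|B \<union> {b})\<close>, which matches the two alternating sums term
  by term; the zeta transform of the Moebius transform of \<open>o(a|\<cdot>)\<close> is then \<open>o(a|\<cdot>)\<close> again.\<close>

lemma moebius_inversion_Pow:
  fixes f :: "'a set \<Rightarrow> 'b::ring_1"
  assumes "finite B"
  shows "(\<Sum>K\<in>Pow B. (-1) ^ card (B - K) * (\<Sum>J\<in>Pow K. f J)) = f B"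
proof -
  have "f B = (\<Sum>K\<in>Pow B. (-1) ^ (card B - card K) * sum f (Pow K))"
    by (rule inclusion_exclusion_mobius) (use assms in auto)
  also have "\<dots> = (\<Sum>K\<in>Pow B. (-1) ^ card (B - K) * (\<Sum>J\<in>Pow K. f J))"
    by (rule sum.cong) (use assms in \<open>auto simp: card_Diff_subset finite_subset\<close>)
  finally show ?thesis ..
qed

lemma sum_Pow_moebius:
  fixes f :: "'a set \<Rightarrow> 'b::ring_1"
  assumes "finite B"
  shows "(\<Sum>K\<in>Pow B. \<Sum>J\<in>Pow K. (-1) ^ card (K - J) * f J) = f B"
proof -
  have "f B = (\<Sum>K\<in>Pow B. (-1) ^ card K * (\<Sum>J\<in>Pow K. (-1) ^ card J * f J))"
    by (rule inclusion_exclusion_symmetric) (use assms in auto)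
  also have "\<dots> = (\<Sum>K\<in>Pow B. \<Sum>J\<in>Pow K. (-1) ^ card (K - J) * f J)"
    unfolding sum_distrib_left
  proof (intro sum.cong refl)
    fix K J assume "K \<in> Pow B" "J \<in> Pow K"
    then have "finite K" "J \<subseteq> K" using assms finite_subset by auto
    then have "(-1) ^ card K * (-1) ^ card J = ((-1) ^ card (K - J) :: 'b)"
      by (simp add: card_Diff_subset finite_subset card_mono
          neg_one_power_add_eq_neg_one_power_diff flip: power_add)
    then show "(-1) ^ card K * ((-1) ^ card J * f J) = (-1) ^ card (K - J) * f J"
      by (metis mult.assoc)
  qed
  finally show ?thesis ..
qed

lemma sum_Pow_insert_alternating:
  fixes g :: "'a set \<Rightarrow> 'b::ring_1"
  assumes "finite R" "b \<notin> R"
  shows "(\<Sum>K\<in>Pow (insert b R). (-1) ^ card (insert b R - K) * g K)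
       = (\<Sum>K\<in>Pow R. (-1) ^ card (R - K) * (g (insert b K) - g K))"
proof -
  have disjoint: "Pow R \<inter> insert b ` Pow R = {}" and inj: "inj_on (insert b) (Pow R)"
    using assms by (auto simp: inj_on_def)
  have without_b: "(-1) ^ card (insert b R - K) * g K = - ((-1) ^ card (R - K) * g K)"
    if "K \<in> Pow R" for K
  proof -
    have "insert b R - K = insert b (R - K)" "b \<notin> R - K" "finite (R - K)"
      using that assms by auto
    then show ?thesis by simp
  qed
  have with_b: "insert b R - insert b K = R - K" for K
    using assms by auto
  have "(\<Sum>K\<in>Pow (insert b R). (-1) ^ card (insert b R - K) * g K)
      = (\<Sum>K\<in>Pow R. (-1) ^ card (insert b R - K) * g K)
        + (\<Sum>K\<in>insert b ` Pow R. (-1) ^ card (insert b R - K) * g K)"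
    unfolding Pow_insert using assms disjoint by (simp add: sum.union_disjoint)
  also have "\<dots> = (\<Sum>K\<in>Pow R. - ((-1) ^ card (R - K) * g K))
        + (\<Sum>K\<in>Pow R. (-1) ^ card (R - K) * g (insert b K))"
    by (simp add: without_b with_b sum.reindex[OF inj])
  finally show ?thesis
    by (simp add: sum_negf sum_subtractf algebra_simps)
qed

definition local_score :: "('a \<times> 'a set \<Rightarrow> real) \<Rightarrow> 'a \<Rightarrow> 'a set \<Rightarrow> real" where
  "local_score o' a B = (if B = {} then 0 else o' (a, B))"

lemma Ups_Sigma: "Ups N = (SIGMA a:N. {B. B \<noteq> {} \<and> B \<subseteq> N - {a}})"
  by (auto simp: Ups_def)

lemma finite_Ups: "finite N \<Longrightarrow> finite (Ups N)"
  unfolding Ups_Sigma by (auto intro!: finite_SigmaI)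

lemma pa_subset: "G \<in> DAG N \<Longrightarrow> pa G a \<subseteq> N - {a}"
  by (auto simp: DAG_def pa_def acyclic_def dest: r_into_trancl)

lemma ip_Ups_eta_G:
  assumes "finite N" "G \<in> DAG N"
  shows "ip_Ups N o' (eta_G G) = (\<Sum>c\<in>N. local_score o' c (pa G c))"
proof -
  have "ip_Ups N o' (eta_G G)
      = (\<Sum>c\<in>N. \<Sum>B\<in>{B. B \<noteq> {} \<and> B \<subseteq> N - {c}}. if B = pa G c then o' (c, B) else 0)"
    unfolding ip_Ups_def Ups_Sigma using assms(1)
    by (subst sum.Sigma) (auto simp: eta_G_def intro!: sum.cong split: if_splits)
  also have "\<dots> = (\<Sum>c\<in>N. local_score o' c (pa G c))"
  proof (rule sum.cong[OF refl])
    fix c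
    have "pa G c \<subseteq> N - {c}" "finite {B. B \<noteq> {} \<and> B \<subseteq> N - {c}}"
      using assms pa_subset[OF assms(2)] by auto
    then show "(\<Sum>B\<in>{B. B \<noteq> {} \<and> B \<subseteq> N - {c}}. if B = pa G c then o' (c, B) else 0)
        = local_score o' c (pa G c)"
      by (auto simp: local_score_def sum.delta')
  qed
  finally show ?thesis .
qed

lemma acyclic_of_rank:
  assumes "\<And>x y. (x, y) \<in> G \<Longrightarrow> r x < (r y :: nat)"
  shows "acyclic G"
proof -
  have "G \<subseteq> inv_image less_than r"
    using assms by auto
  then have "wf G"
    by (rule wf_subset[rotated]) simp
  then show ?thesis
    by (rule wf_acyclic)
qed

text \<open>Reversing \<open>a \<rightarrow> b\<close> keeps the skeleton and creates no immorality, since \<open>a\<close> and \<open>b\<close>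
  have the same parents in \<open>B\<close>.\<close>
definition pair_dag :: "'a set \<Rightarrow> 'a \<Rightarrow> 'a \<Rightarrow> ('a \<times> 'a) set" where
  "pair_dag B a b = B \<times> {a, b} \<union> {(a, b)}"

context
  fixes N B :: "'a set" and a b :: 'a
  assumes ab: "a \<in> N" "b \<in> N" "a \<noteq> b" and B: "B \<subseteq> N - {a, b}"
begin

lemma pair_dag_in_DAG: "pair_dag B a b \<in> DAG N"
proof -
  have "acyclic (pair_dag B a b)"
    by (rule acyclic_of_rank[where r = "\<lambda>x. if x = a then 1 else if x = b then 2 else 0"])
      (use ab B in \<open>auto simp: pair_dag_def\<close>)
  then show ?thesis
    using ab B by (auto simp: DAG_def pair_dag_def)
qed

lemma pa_pair_dag:
  "pa (pair_dag B a b) a = B" "pa (pair_dag B a b) b = insert a B"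
  "c \<notin> {a, b} \<Longrightarrow> pa (pair_dag B a b) c = {}"
  using ab B by (auto simp: pa_def pair_dag_def)

lemma ip_Ups_pair_dag:
  assumes "finite N"
  shows "ip_Ups N o' (eta_G (pair_dag B a b)) = local_score o' a B + local_score o' b (insert a B)"
proof -
  have "ip_Ups N o' (eta_G (pair_dag B a b)) = (\<Sum>c\<in>{a, b}. local_score o' c (pa (pair_dag B a b) c))"
    unfolding ip_Ups_eta_G[OF assms pair_dag_in_DAG]
    by (rule sum.mono_neutral_right) (use assms ab in \<open>auto simp: local_score_def pa_pair_dag\<close>)
  then show ?thesis
    using ab by (simp add: pa_pair_dag)
qed

lemma markov_equiv_pair_dag: "markov_equiv (pair_dag B a b) (pair_dag B b a)"
  using ab B by (auto simp: markov_equiv_def immoralities_def adj_def pair_dag_def)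

end

lemma SE_objective_reverse_edge:
  assumes "finite N" "SE_objective N o'" "a \<in> N" "b \<in> N" "a \<noteq> b" "B \<subseteq> N - {a, b}"
  shows "local_score o' a B + local_score o' b (insert a B)
       = local_score o' b B + local_score o' a (insert b B)"
proof -
  have B': "B \<subseteq> N - {b, a}"
    using assms(6) by auto
  have "ip_Ups N o' (eta_G (pair_dag B a b)) = ip_Ups N o' (eta_G (pair_dag B b a))"
    using assms(2) pair_dag_in_DAG[OF assms(3-6)] pair_dag_in_DAG[OF assms(4,3) assms(5)[symmetric] B']
      markov_equiv_pair_dag[OF assms(3-6)]
    unfolding SE_objective_def by blast
  then show ?thesis
    using ip_Ups_pair_dag[OF assms(3-6,1)] ip_Ups_pair_dag[OF assms(4,3) assms(5)[symmetric] B' assms(1)]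
    by simp
qed

definition moebius_coeff :: "('a \<times> 'a set \<Rightarrow> real) \<Rightarrow> 'a \<Rightarrow> 'a set \<Rightarrow> real" where
  "moebius_coeff o' b T =
     (\<Sum>K\<in>{K. K \<noteq> {} \<and> K \<subseteq> T - {b}}. (-1) ^ card (T - {b} - K) * o' (b, K))"

lemma moebius_coeff_Pow:
  assumes "finite T"
  shows "moebius_coeff o' b T = (\<Sum>K\<in>Pow (T - {b}). (-1) ^ card (T - {b} - K) * local_score o' b K)"
  unfolding moebius_coeff_def
  by (rule sum.mono_neutral_cong_left) (use assms in \<open>auto simp: local_score_def\<close>)

lemma moebius_coeff_indep:
  assumes "finite N" "SE_objective N o'" "T \<subseteq> N" "a \<in> T" "b \<in> T"
  shows "moebius_coeff o' a T = moebius_coeff o' b T"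
proof (cases "a = b")
  case False
  define R where "R = T - {a, b}"
  have "finite T" "finite R"
    using assms finite_subset by (auto simp: R_def)
  have Ta: "T - {a} = insert b R" and Tb: "T - {b} = insert a R"
    using assms False by (auto simp: R_def)
  have "moebius_coeff o' a T
      = (\<Sum>K\<in>Pow R. (-1) ^ card (R - K) * (local_score o' a (insert b K) - local_score o' a K))"
    unfolding moebius_coeff_Pow[OF \<open>finite T\<close>] Ta
    by (rule sum_Pow_insert_alternating) (use \<open>finite R\<close> in \<open>auto simp: R_def\<close>)
  also have "\<dots> = (\<Sum>K\<in>Pow R. (-1) ^ card (R - K) * (local_score o' b (insert a K) - local_score o' b K))"
  proof (rule sum.cong[OF refl])
    fix K assume "K \<in> Pow R"
    then have "a \<in> N" "b \<in> N" "K \<subseteq> N - {a, b}"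
      using assms by (auto simp: R_def)
    then have "local_score o' a K + local_score o' b (insert a K)
        = local_score o' b K + local_score o' a (insert b K)"
      by (rule SE_objective_reverse_edge[OF assms(1,2) _ _ False])
    then show "(-1) ^ card (R - K) * (local_score o' a (insert b K) - local_score o' a K)
        = (-1) ^ card (R - K) * (local_score o' b (insert a K) - local_score o' b K)"
      by simp
  qed
  also have "\<dots> = moebius_coeff o' b T"
    unfolding moebius_coeff_Pow[OF \<open>finite T\<close>] Tb
    by (rule sum_Pow_insert_alternating[symmetric]) (use \<open>finite R\<close> in \<open>auto simp: R_def\<close>)
  finally show ?thesis .
qed simp

text \<open>The transpose of the linear map \<open>\<eta> \<mapsto> c\<^sub>\<eta>\<close>.\<close>
definition c_adjoint :: "('a set \<Rightarrow> real) \<Rightarrow> 'a \<times> 'a set \<Rightarrow> real" where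
  "c_adjoint \<tau> = (\<lambda>(a, B). \<Sum>K\<in>{K. K \<noteq> {} \<and> K \<subseteq> B}. \<tau> (insert a K))"

lemma Sets2_remove_nonempty: "S \<in> Sets2 N \<Longrightarrow> S - {a} \<noteq> {}"
  by (auto simp: Sets2_def dest!: subset_singletonD)

lemma insert_in_Sets2:
  assumes "finite N" "a \<in> N" "K \<subseteq> N - {a}" "K \<noteq> {}"
  shows "insert a K \<in> Sets2 N"
proof -
  have "finite K" "a \<notin> K"
    using assms finite_subset by auto
  then show ?thesis
    using assms by (auto simp: Sets2_def Suc_le_eq card_gt_0_iff)
qed

lemma c_eta_as_sum_Ups:
  assumes "finite N" "S \<in> Sets2 N"
  shows "c_eta N \<eta> S = (\<Sum>p\<in>{p\<in>Ups N. fst p \<in> S \<and> S - {fst p} \<subseteq> snd p}. \<eta> p)"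
proof -
  have "{p\<in>Ups N. fst p \<in> S \<and> S - {fst p} \<subseteq> snd p}
      = (SIGMA a:S. {B. S - {a} \<subseteq> B \<and> B \<subseteq> N - {a}})"
    using assms(2) Sets2_remove_nonempty[OF assms(2)] by (auto simp: Ups_def Sets2_def)
  moreover have "finite S"
    using assms finite_subset by (auto simp: Sets2_def)
  ultimately show ?thesis
    unfolding c_eta_def using assms(1) by (simp add: sum.Sigma split_def)
qed

lemma Sets2_filter_eq_insert_image:
  assumes "finite N" "(a, B) \<in> Ups N"
  shows "{S\<in>Sets2 N. a \<in> S \<and> S - {a} \<subseteq> B} = insert a ` {K. K \<noteq> {} \<and> K \<subseteq> B}"
proof
  show "{S\<in>Sets2 N. a \<in> S \<and> S - {a} \<subseteq> B} \<subseteq> insert a ` {K. K \<noteq> {} \<and> K \<subseteq> B}"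
  proof
    fix S assume S: "S \<in> {S\<in>Sets2 N. a \<in> S \<and> S - {a} \<subseteq> B}"
    then have "S = insert a (S - {a})" "S - {a} \<in> {K. K \<noteq> {} \<and> K \<subseteq> B}"
      using Sets2_remove_nonempty[of S N a] by auto
    then show "S \<in> insert a ` {K. K \<noteq> {} \<and> K \<subseteq> B}"
      by (rule image_eqI)
  qed
  show "insert a ` {K. K \<noteq> {} \<and> K \<subseteq> B} \<subseteq> {S\<in>Sets2 N. a \<in> S \<and> S - {a} \<subseteq> B}"
  proof
    fix S assume "S \<in> insert a ` {K. K \<noteq> {} \<and> K \<subseteq> B}"
    then obtain K where S: "S = insert a K" and K: "K \<noteq> {}" "K \<subseteq> B"
      by blast
    have "a \<in> N" "K \<subseteq> N - {a}"
      using assms(2) K by (auto simp: Ups_def)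
    then have "S \<in> Sets2 N"
      unfolding S using insert_in_Sets2[OF assms(1)] K(1) by blast
    then show "S \<in> {S\<in>Sets2 N. a \<in> S \<and> S - {a} \<subseteq> B}"
      using S K by auto
  qed
qed

lemma ip_S_c_eta:
  assumes "finite N"
  shows "ip_S N \<tau> (c_eta N \<eta>) = ip_Ups N (c_adjoint \<tau>) \<eta>"
proof -
  let ?contributes = "\<lambda>S p. fst p \<in> S \<and> S - {fst p} \<subseteq> snd p"
  have "ip_S N \<tau> (c_eta N \<eta>) = (\<Sum>S\<in>Sets2 N. \<Sum>p\<in>{p\<in>Ups N. ?contributes S p}. \<tau> S * \<eta> p)"
    unfolding ip_S_def by (simp add: c_eta_as_sum_Ups[OF assms] sum_distrib_left)
  also have "\<dots> = (\<Sum>p\<in>Ups N. \<Sum>S\<in>{S\<in>Sets2 N. ?contributes S p}. \<tau> S * \<eta> p)"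
    using assms finite_Ups[OF assms] by (intro sum.swap_restrict) (simp_all add: Sets2_def)
  also have "\<dots> = ip_Ups N (c_adjoint \<tau>) \<eta>"
    unfolding ip_Ups_def sum_distrib_right[symmetric]
  proof (rule sum.cong[OF refl])
    fix p assume p: "p \<in> Ups N"
    obtain a B where "p = (a, B)" by (cases p)
    moreover have "inj_on (insert a) {K. K \<noteq> {} \<and> K \<subseteq> B}"
      using p \<open>p = (a, B)\<close> by (auto simp: Ups_def inj_on_def)
    ultimately show "(\<Sum>S\<in>{S\<in>Sets2 N. ?contributes S p}. \<tau> S) * \<eta> p = c_adjoint \<tau> p * \<eta> p"
      using p by (simp add: Sets2_filter_eq_insert_image[OF assms] sum.reindex c_adjoint_def)
  qed
  finally show ?thesis .
qed

lemma ip_Ups_eq_all_iff: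
  assumes "finite N"
  shows "(\<forall>\<eta>. ip_Ups N f \<eta> = ip_Ups N g \<eta>) \<longleftrightarrow> (\<forall>p\<in>Ups N. f p = g p)"
proof
  assume all: "\<forall>\<eta>. ip_Ups N f \<eta> = ip_Ups N g \<eta>"
  show "\<forall>p\<in>Ups N. f p = g p"
  proof
    fix p assume p: "p \<in> Ups N"
    have "ip_Ups N h (\<lambda>q. if q = p then 1 else 0) = h p" for h :: "_ \<Rightarrow> real"
      using p finite_Ups[OF assms] by (simp add: ip_Ups_def if_distrib sum.delta cong: if_cong)
    then show "f p = g p"
      using all by metis
  qed
qed (simp add: ip_Ups_def)

definition represents :: "'a set \<Rightarrow> ('a \<times> 'a set \<Rightarrow> real) \<Rightarrow> ('a set \<Rightarrow> real) \<Rightarrow> bool" where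
  "represents N o' \<tau> \<longleftrightarrow>
     (\<forall>T. T \<notin> Sets2 N \<longrightarrow> \<tau> T = 0) \<and> (\<forall>\<eta>. ip_Ups N o' \<eta> = ip_S N \<tau> (c_eta N \<eta>))"

lemma represents_iff:
  assumes "finite N"
  shows "represents N o' \<tau> \<longleftrightarrow>
    (\<forall>T. T \<notin> Sets2 N \<longrightarrow> \<tau> T = 0) \<and> (\<forall>p\<in>Ups N. o' p = c_adjoint \<tau> p)"
  unfolding represents_def ip_S_c_eta[OF assms] ip_Ups_eq_all_iff[OF assms] ..

lemma represents_imp_moebius_coeff:
  assumes "finite N" "represents N o' \<tau>" "T \<in> Sets2 N" "b \<in> T"
  shows "\<tau> T = moebius_coeff o' b T"
proof -
  define R where "R = T - {b}"
  define h where "h K = (if K = {} then 0 else \<tau> (insert b K))" for K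
  have "T \<subseteq> N" "finite T" "finite R" "R \<noteq> {}"
    using assms finite_subset Sets2_remove_nonempty[of T N b] by (auto simp: Sets2_def R_def)
  have score: "local_score o' b K = (\<Sum>J\<in>Pow K. h J)" if "K \<subseteq> R" for K
  proof (cases "K = {}")
    case False
    then have "(b, K) \<in> Ups N"
      using that \<open>T \<subseteq> N\<close> assms(4) by (auto simp: Ups_def R_def)
    then have "o' (b, K) = (\<Sum>J\<in>{J. J \<noteq> {} \<and> J \<subseteq> K}. \<tau> (insert b J))"
      using assms(2) by (simp add: represents_iff[OF assms(1)] c_adjoint_def)
    also have "\<dots> = (\<Sum>J\<in>Pow K. h J)"
      by (rule sum.mono_neutral_cong_left)
        (use finite_subset[OF that \<open>finite R\<close>] in \<open>auto simp: h_def\<close>)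
    finally show ?thesis
      using False by (simp add: local_score_def)
  qed (simp add: local_score_def h_def)
  have "moebius_coeff o' b T = (\<Sum>K\<in>Pow R. (-1) ^ card (R - K) * (\<Sum>J\<in>Pow K. h J))"
    unfolding moebius_coeff_Pow[OF \<open>finite T\<close>] R_def[symmetric] by (auto simp: score intro!: sum.cong)
  also have "\<dots> = h R"
    by (rule moebius_inversion_Pow[OF \<open>finite R\<close>])
  also have "\<dots> = \<tau> T"
    using \<open>R \<noteq> {}\<close> assms(4) by (simp add: h_def R_def insert_absorb)
  finally show ?thesis ..
qed

definition tau_SE :: "'a set \<Rightarrow> ('a \<times> 'a set \<Rightarrow> real) \<Rightarrow> 'a set \<Rightarrow> real" where
  "tau_SE N o' T = (if T \<in> Sets2 N then moebius_coeff o' (SOME b. b \<in> T) T else 0)"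

lemma tau_SE_eq:
  assumes "finite N" "SE_objective N o'" "T \<in> Sets2 N" "b \<in> T"
  shows "tau_SE N o' T = moebius_coeff o' b T"
proof -
  have "T \<subseteq> N"
    using assms(3) by (simp add: Sets2_def)
  moreover have "(SOME b. b \<in> T) \<in> T"
    using assms(4) by (rule someI)
  ultimately have "moebius_coeff o' (SOME b. b \<in> T) T = moebius_coeff o' b T"
    using assms(4) by (rule moebius_coeff_indep[OF assms(1,2)])
  then show ?thesis
    using assms(3) by (simp add: tau_SE_def)
qed

lemma c_adjoint_tau_SE:
  assumes "finite N" "SE_objective N o'" "p \<in> Ups N"
  shows "c_adjoint (tau_SE N o') p = o' p"
proof -
  obtain a B where p: "p = (a, B)" by (cases p)
  have "a \<in> N" "B \<subseteq> N - {a}" "B \<noteq> {}" "finite B"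
    using assms(1,3) finite_subset by (auto simp: p Ups_def)
  have tau: "tau_SE N o' (insert a K) = (\<Sum>J\<in>Pow K. (-1) ^ card (K - J) * local_score o' a J)"
    if "K \<noteq> {}" "K \<subseteq> B" for K
  proof -
    have "K \<subseteq> N - {a}" "finite K" "a \<notin> K"
      using that \<open>B \<subseteq> N - {a}\<close> \<open>finite B\<close> finite_subset by auto
    then have "tau_SE N o' (insert a K) = moebius_coeff o' a (insert a K)"
      using tau_SE_eq[OF assms(1,2) insert_in_Sets2[OF assms(1) \<open>a \<in> N\<close> _ that(1)]] by blast
    then show ?thesis
      using \<open>finite K\<close> \<open>a \<notin> K\<close> by (simp add: moebius_coeff_Pow)
  qed
  have "c_adjoint (tau_SE N o') p
      = (\<Sum>K\<in>Pow B. \<Sum>J\<in>Pow K. (-1) ^ card (K - J) * local_score o' a J)"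
    unfolding p c_adjoint_def prod.case
    by (rule sum.mono_neutral_cong_left) (use \<open>finite B\<close> in \<open>auto simp: tau local_score_def\<close>)
  also have "\<dots> = local_score o' a B"
    by (rule sum_Pow_moebius[OF \<open>finite B\<close>])
  finally show ?thesis
    using \<open>B \<noteq> {}\<close> by (simp add: p local_score_def)
qed

lemma represents_tau_SE:
  assumes "finite N" "SE_objective N o'"
  shows "represents N o' (tau_SE N o')"
  using c_adjoint_tau_SE[OF assms] by (simp add: represents_iff[OF assms(1)] tau_SE_def)

lemma represents_unique:
  assumes "finite N" "SE_objective N o'" "represents N o' \<tau>"
  shows "\<tau> = tau_SE N o'"
proof
  fix T
  show "\<tau> T = tau_SE N o' T"
  proof (cases "T \<in> Sets2 N")
    case True
    then obtain b where "b \<in> T"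
      by (fastforce simp: Sets2_def)
    then show ?thesis
      using represents_imp_moebius_coeff[OF assms(1,3) True] tau_SE_eq[OF assms(1,2) True] by simp
  next
    case False
    then show ?thesis
      using assms(3) by (simp add: represents_def tau_SE_def)
  qed
qed

theorem lemma10:
  fixes N :: "'a set" and o' :: "'a \<times> 'a set \<Rightarrow> real"
  assumes "finite N" and "2 \<le> card N"
    and "SE_objective N o'"
  shows "(\<exists>!\<tau>. (\<forall>T. T \<notin> Sets2 N \<longrightarrow> \<tau> T = 0) \<and>
              (\<forall>\<eta>. ip_Ups N o' \<eta> = ip_S N \<tau> (c_eta N \<eta>)))
    \<and> (\<forall>\<tau>. ((\<forall>T. T \<notin> Sets2 N \<longrightarrow> \<tau> T = 0) \<and>
              (\<forall>\<eta>. ip_Ups N o' \<eta> = ip_S N \<tau> (c_eta N \<eta>))) \<longrightarrow>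
         (\<forall>T\<in>Sets2 N. \<forall>b\<in>T.
            \<tau> T = (\<Sum>K\<in>{K. K \<noteq> {} \<and> K \<subseteq> T - {b}}.
                     (-1::real) ^ card (T - {b} - K) * o' (b, K))))"
proof -
  have "\<exists>!\<tau>. represents N o' \<tau>"
    using represents_tau_SE[OF assms(1,3)] represents_unique[OF assms(1,3)] by (rule ex1I)
  moreover have "\<forall>\<tau>. represents N o' \<tau> \<longrightarrow> (\<forall>T\<in>Sets2 N. \<forall>b\<in>T. \<tau> T = moebius_coeff o' b T)"
    using represents_imp_moebius_coeff[OF assms(1)] by blast
  ultimately show ?thesis
    unfolding represents_def moebius_coeff_def by (rule conjI)
qed

end
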